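(* Let $B$ be a blueprint. Every maximal ideal of $B$ is a prime ideal. If $B$ has a zero, then every maximal congruence on $B$ is a prime congruence.
   Context: A monoid is a commutative semigroup $A$, written multiplicatively, with neutral element $1$. For a monoid $A$, $\mathbb N[A]$ denotes the semiring of finite formal sums $\sum a_i$ of elements $a_i\in A$ (repetitions allowed), with empty sum $\underline0$ and multiplication extended bilinearly from $A$. A pre-addition on $A$ is a relation $\mathcal R\subseteq\mathbb N[A]\times\mathbb N[A]$, written $\sum a_i\equiv\sum b_j$, which is an equivalence relation and satisfies: if $\sum a_i\equiv\sum b_j$ and $\sum c_k\equiv\sum d_l$, then $\sum a_i+\sum c_k\equiv\sum b_j+\sum d_l$ and $\sum_{i,k}a_ic_k\equiv\sum_{j,l}b_jd_l$. A blueprint $B=(A,\mathcal R)$ is a monoid $A$ with a pre-addition $\mathcal R$; we write $a\in B$ for $a\in A$. An element $e$ with $e\equiv\underline0$ is a zero of $B$. $B$ is proper if $a\equiv b$ for $a,b\in A$ implies $a=b$. For an equivalence relation $\sim$ on $A$, its linear extension $\sim_{\mathbb N}$ is the equivalence relation on $\mathbb N[A]$ generated by $\sum_{i=1}^n a_i\sim_{\mathbb N}\sum_{i=1}^n b_i$ whenever $a_i\sim b_i$ for all $i$; $\sim_{\mathcal R}$ is the smallest equivalence relation on $\mathbb N[A]$ containing $\mathcal R$ and $\sim_{\mathbb N}$. A congruence on $B$ is an equivalence relation $\sim$ on $A$ such that (C1) $\sim_{\mathbb N}$ is a pre-addition, and (C2) the restriction of $\sim_{\mathcal R}$ to $A$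 equals $\sim$. The quotient $B/\sim$ has monoid $A/\sim$ and the smallest pre-addition containing all $\sum[a_i]\equiv\sum[b_j]$ with $\sum a_i\equiv\sum b_j$ in $B$. A congruence is proper if it has more than one equivalence class; a maximal congruence is a proper congruence not contained in a strictly larger proper congruence. A blueprint is integral if it is proper, $1\not\equiv\underline0$, and every element is either a zero or integral (multiplication by it is injective on the monoid). A prime congruence is a proper congruence $\sim$ with $B/\sim$ integral. For $I\subseteq B$: $a\sim^I b$ iff $a=b$ or $a,b\in I$; $a\sim_I b$ iff there is a finite sequence $a\equiv\sum_k c_{1,k}\sim^I_{\mathbb N}\sum_k d_{1,k}\equiv\cdots\sim^I_{\mathbb N}\sum_k d_{n,k}\equiv b$ with $c_{i,k},d_{i,k}\in A$. An ideal is a subset $I$ with (I1) $IB\subseteq I$; (I2) every zero of $B$ lies in $I$; (I3) if $a\sim_I b$ and $b\in I$ then $a\in I$. An ideal is proper if $I\neq B$; a maximal ideal is a proper ideal not contained in a strictly larger proper ideal. A prime ideal is an ideal $\mathfrak p$ such that $B\setminus\mathfrak p$ is a submonoid of $A$ (contains $1$, closed under multiplication). *)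

theory Defs
  imports "HOL-Library.Multiset"
begin

text \<open>A blueprint: a commutative monoid given by a carrier, multiplication and unit,
  together with a relation on finite formal sums (multisets) of monoid elements.
  The empty multiset is the empty sum.\<close>

record 'a blueprint =
  bp_carrier :: "'a set"
  bp_mult :: "'a \<Rightarrow> 'a \<Rightarrow> 'a"
  bp_one :: 'a
  bp_rel :: "('a multiset \<times> 'a multiset) set"

definition is_monoid :: "('a, 'b) blueprint_scheme \<Rightarrow> bool" where
  "is_monoid B \<longleftrightarrow> bp_one B \<in> bp_carrier B
    \<and> (\<forall>a\<in>bp_carrier B. \<forall>b\<in>bp_carrier B. bp_mult B a b \<in> bp_carrier B)
    \<and> (\<forall>a\<in>bp_carrier B. \<forall>b\<in>bp_carrier B. \<forall>c\<in>bp_carrier B.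
          bp_mult B (bp_mult B a b) c = bp_mult B a (bp_mult B b c))
    \<and> (\<forall>a\<in>bp_carrier B. \<forall>b\<in>bp_carrier B. bp_mult B a b = bp_mult B b a)
    \<and> (\<forall>a\<in>bp_carrier B. bp_mult B (bp_one B) a = a)"

definition NA :: "('a, 'b) blueprint_scheme \<Rightarrow> 'a multiset set" where
  "NA B = {M. set_mset M \<subseteq> bp_carrier B}"

definition msum_mult :: "('a, 'b) blueprint_scheme \<Rightarrow> 'a multiset \<Rightarrow> 'a multiset \<Rightarrow> 'a multiset" where
  "msum_mult B M N = sum_mset (image_mset (\<lambda>a. image_mset (\<lambda>c. bp_mult B a c) N) M)"

definition pre_addition :: "('a, 'b) blueprint_scheme \<Rightarrow> ('a multiset \<times> 'a multiset) set \<Rightarrow> bool" where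
  "pre_addition B R \<longleftrightarrow> equiv (NA B) R
    \<and> (\<forall>M N P Q. (M, N) \<in> R \<longrightarrow> (P, Q) \<in> R \<longrightarrow>
         (M + P, N + Q) \<in> R \<and> (msum_mult B M P, msum_mult B N Q) \<in> R)"

definition blueprint :: "('a, 'b) blueprint_scheme \<Rightarrow> bool" where
  "blueprint B \<longleftrightarrow> is_monoid B \<and> pre_addition B (bp_rel B)"

definition is_zero :: "('a, 'b) blueprint_scheme \<Rightarrow> 'a \<Rightarrow> bool" where
  "is_zero B e \<longleftrightarrow> e \<in> bp_carrier B \<and> ({#e#}, {#}) \<in> bp_rel B"

definition proper_bp :: "('a, 'b) blueprint_scheme \<Rightarrow> bool" where
  "proper_bp B \<longleftrightarrow> (\<forall>a\<in>bp_carrier B. \<forall>b\<in>bp_carrier B. ({#a#}, {#b#}) \<in> bp_rel B \<longrightarrow> a = b)"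

definition integral_elem :: "('a, 'b) blueprint_scheme \<Rightarrow> 'a \<Rightarrow> bool" where
  "integral_elem B a \<longleftrightarrow> a \<in> bp_carrier B \<and> inj_on (bp_mult B a) (bp_carrier B)"

definition integral_bp :: "('a, 'b) blueprint_scheme \<Rightarrow> bool" where
  "integral_bp B \<longleftrightarrow> proper_bp B \<and> ({#bp_one B#}, {#}) \<notin> bp_rel B
    \<and> (\<forall>a\<in>bp_carrier B. is_zero B a \<or> integral_elem B a)"

definition gen_equiv :: "'c set \<Rightarrow> ('c \<times> 'c) set \<Rightarrow> ('c \<times> 'c) set" where
  "gen_equiv X S = \<Inter>{E. equiv X E \<and> S \<subseteq> E}"

definition lin_gen :: "('a \<times> 'a) set \<Rightarrow> ('a multiset \<times> 'a multiset) set" where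
  "lin_gen r = {(mset (map fst ps), mset (map snd ps)) | ps. set ps \<subseteq> r}"

definition lin_ext :: "('a, 'b) blueprint_scheme \<Rightarrow> ('a \<times> 'a) set \<Rightarrow> ('a multiset \<times> 'a multiset) set" where
  "lin_ext B r = gen_equiv (NA B) (lin_gen r)"

definition R_ext :: "('a, 'b) blueprint_scheme \<Rightarrow> ('a \<times> 'a) set \<Rightarrow> ('a multiset \<times> 'a multiset) set" where
  "R_ext B r = gen_equiv (NA B) (bp_rel B \<union> lin_ext B r)"

definition congruence :: "('a, 'b) blueprint_scheme \<Rightarrow> ('a \<times> 'a) set \<Rightarrow> bool" where
  "congruence B r \<longleftrightarrow> equiv (bp_carrier B) r
    \<and> pre_addition B (lin_ext B r)
    \<and> {(a, b). a \<in> bp_carrier B \<and> b \<in> bp_carrier B \<and> ({#a#}, {#b#}) \<in> R_ext B r} = r"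

definition quot_monoid :: "('a, 'b) blueprint_scheme \<Rightarrow> ('a \<times> 'a) set \<Rightarrow> 'a set blueprint" where
  "quot_monoid B r = \<lparr> bp_carrier = bp_carrier B // r,
     bp_mult = (\<lambda>X Y. r `` {bp_mult B (SOME a. a \<in> X) (SOME b. b \<in> Y)}),
     bp_one = r `` {bp_one B},
     bp_rel = {} \<rparr>"

definition quotient_bp :: "('a, 'b) blueprint_scheme \<Rightarrow> ('a \<times> 'a) set \<Rightarrow> 'a set blueprint" where
  "quotient_bp B r = quot_monoid B r \<lparr> bp_rel :=
     \<Inter>{P. pre_addition (quot_monoid B r) P \<and>
        {(image_mset (\<lambda>a. r `` {a}) M, image_mset (\<lambda>a. r `` {a}) N) | M N. (M, N) \<in> bp_rel B} \<subseteq> P} \<rparr>"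

definition proper_congruence :: "('a, 'b) blueprint_scheme \<Rightarrow> ('a \<times> 'a) set \<Rightarrow> bool" where
  "proper_congruence B r \<longleftrightarrow> congruence B r \<and> (\<exists>a\<in>bp_carrier B. \<exists>b\<in>bp_carrier B. (a, b) \<notin> r)"

definition maximal_congruence :: "('a, 'b) blueprint_scheme \<Rightarrow> ('a \<times> 'a) set \<Rightarrow> bool" where
  "maximal_congruence B r \<longleftrightarrow> proper_congruence B r
    \<and> (\<forall>r'. proper_congruence B r' \<and> r \<subseteq> r' \<longrightarrow> r' = r)"

definition prime_congruence :: "('a, 'b) blueprint_scheme \<Rightarrow> ('a \<times> 'a) set \<Rightarrow> bool" where
  "prime_congruence B r \<longleftrightarrow> proper_congruence B r \<and> integral_bp (quotient_bp B r)"

definition sim_sup :: "('a, 'b) blueprint_scheme \<Rightarrow> 'a set \<Rightarrow> ('a \<times> 'a) set" where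
  "sim_sup B I = {(a, b). a \<in> bp_carrier B \<and> b \<in> bp_carrier B \<and> (a = b \<or> (a \<in> I \<and> b \<in> I))}"

definition sim_sub :: "('a, 'b) blueprint_scheme \<Rightarrow> 'a set \<Rightarrow> ('a \<times> 'a) set" where
  "sim_sub B I = {(a, b). a \<in> bp_carrier B \<and> b \<in> bp_carrier B \<and>
     ({#a#}, {#b#}) \<in> (bp_rel B O lin_ext B (sim_sup B I))\<^sup>+ O bp_rel B}"

definition ideal :: "('a, 'b) blueprint_scheme \<Rightarrow> 'a set \<Rightarrow> bool" where
  "ideal B I \<longleftrightarrow> I \<subseteq> bp_carrier B
    \<and> (\<forall>a\<in>I. \<forall>b\<in>bp_carrier B. bp_mult B a b \<in> I)
    \<and> (\<forall>e. is_zero B e \<longrightarrow> e \<in> I)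
    \<and> (\<forall>a b. (a, b) \<in> sim_sub B I \<and> b \<in> I \<longrightarrow> a \<in> I)"

definition maximal_ideal :: "('a, 'b) blueprint_scheme \<Rightarrow> 'a set \<Rightarrow> bool" where
  "maximal_ideal B I \<longleftrightarrow> ideal B I \<and> I \<noteq> bp_carrier B
    \<and> (\<forall>J. ideal B J \<and> J \<noteq> bp_carrier B \<and> I \<subseteq> J \<longrightarrow> J = I)"

definition prime_ideal :: "('a, 'b) blueprint_scheme \<Rightarrow> 'a set \<Rightarrow> bool" where
  "prime_ideal B P \<longleftrightarrow> ideal B P \<and> bp_one B \<in> bp_carrier B - P
    \<and> (\<forall>a\<in>bp_carrier B - P. \<forall>b\<in>bp_carrier B - P. bp_mult B a b \<in> bp_carrier B - P)"

end

theory Submission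
  imports Defs
begin

text \<open>
  Both halves use the same idea as in commutative algebra: a "colon" construction.
  For an ideal \<open>I\<close> and an element \<open>b\<close>, the set \<open>(I : b) = {c. c b \<in> I}\<close> is again an
  ideal containing \<open>I\<close>; if \<open>a b \<in> I\<close> with \<open>a, b \<notin> I\<close>, then \<open>(I : b)\<close> is a proper ideal
  strictly larger than \<open>I\<close>, contradicting maximality.  Likewise, for a congruence \<open>\<sim>\<close> and
  an element \<open>a\<close>, the relation \<open>x \<sim>\<^sub>a y \<longleftrightarrow> a x \<sim> a y\<close> is a congruence containing \<open>\<sim>\<close>.  It is
  proper unless \<open>a\<close> is equivalent to the zero, so for a maximal congruence multiplication
  by any non-zero class of \<open>B/\<sim>\<close> is injective; together with properness of the quotient
  and \<open>[1] \<noteq> 0\<close> this says that \<open>B/\<sim>\<close> is integral.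
\<close>

lemma gen_equiv_sub: "S \<subseteq> gen_equiv X S"
  unfolding gen_equiv_def by blast

lemma gen_equiv_equiv:
  assumes "S \<subseteq> X \<times> X"
  shows "equiv X (gen_equiv X S)"
proof -
  have full: "X \<times> X \<in> {E. equiv X E \<and> S \<subseteq> E}"
    using assms by (auto simp: equiv_def refl_on_def sym_def trans_def)
  show ?thesis unfolding gen_equiv_def
  proof (rule equivI)
    show "\<Inter>{E. equiv X E \<and> S \<subseteq> E} \<subseteq> X \<times> X" using full by (rule Inter_lower)
    show "refl_on X (\<Inter>{E. equiv X E \<and> S \<subseteq> E})" by (auto simp: refl_on_def equiv_def)
    show "sym (\<Inter>{E. equiv X E \<and> S \<subseteq> E})" by (auto simp: sym_def equiv_def)
    show "trans (\<Inter>{E. equiv X E \<and> S \<subseteq> E})" unfolding trans_def equiv_def by blast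
  qed
qed

lemma gen_equiv_least: "equiv X E \<Longrightarrow> S \<subseteq> E \<Longrightarrow> gen_equiv X S \<subseteq> E"
  unfolding gen_equiv_def by blast

lemma gen_equiv_map:
  assumes G: "equiv X G" and f: "\<And>M. M \<in> X \<Longrightarrow> f M \<in> X"
    and S: "\<And>M N. (M, N) \<in> S \<Longrightarrow> (f M, f N) \<in> G" and SX: "S \<subseteq> X \<times> X"
    and MN: "(M, N) \<in> gen_equiv X S"
  shows "(f M, f N) \<in> G"
proof -
  let ?E = "{(M, N). M \<in> X \<and> N \<in> X \<and> (f M, f N) \<in> G}"
  have "equiv X ?E"
    using G f unfolding equiv_def refl_on_def sym_def trans_def by blast
  moreover have "S \<subseteq> ?E" using S SX by blast
  ultimately have "gen_equiv X S \<subseteq> ?E" by (rule gen_equiv_least)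
  then show ?thesis using MN by blast
qed

lemma gen_equiv_op:
  assumes SX: "S \<subseteq> X \<times> X"
    and cl: "\<And>M N. M \<in> X \<Longrightarrow> N \<in> X \<Longrightarrow> op M N \<in> X"
    and l: "\<And>M N P. (M, N) \<in> S \<Longrightarrow> P \<in> X \<Longrightarrow> (op M P, op N P) \<in> S"
    and r: "\<And>M N P. (M, N) \<in> S \<Longrightarrow> P \<in> X \<Longrightarrow> (op P M, op P N) \<in> S"
    and MN: "(M, N) \<in> gen_equiv X S" and PQ: "(P, Q) \<in> gen_equiv X S"
  shows "(op M P, op N Q) \<in> gen_equiv X S"
proof -
  have eq: "equiv X (gen_equiv X S)" by (rule gen_equiv_equiv[OF SX])
  then have P: "P \<in> X" and N: "N \<in> X" using MN PQ by (auto simp: equiv_def)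
  have left: "(op M P, op N P) \<in> gen_equiv X S"
    using gen_equiv_map[OF eq, of "\<lambda>M. op M P", OF _ _ SX MN] cl P l gen_equiv_sub by blast
  have right: "(op N P, op N Q) \<in> gen_equiv X S"
    using gen_equiv_map[OF eq, of "\<lambda>P. op N P", OF _ _ SX PQ] cl N r gen_equiv_sub by blast
  show ?thesis using left right eq unfolding equiv_def trans_def by blast
qed

text \<open>A relation-preserving map preserves transitive closures; used to push the chains
  defining \<open>\<sim>\<^sub>I\<close> through a multiplication.\<close>

lemma trancl_map:
  assumes "(x, y) \<in> A\<^sup>+" and "\<And>u v. (u, v) \<in> A \<Longrightarrow> (f u, f v) \<in> C"
  shows "(f x, f y) \<in> C\<^sup>+"
  using assms(1)
proof (induction rule: trancl.induct)
  case (r_into_trancl a b) then show ?case using assms(2) by blast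
next
  case (trancl_into_trancl a b c) then show ?case using assms(2) by (meson trancl.simps)
qed

lemma monoid_one: "is_monoid B \<Longrightarrow> bp_one B \<in> bp_carrier B"
  and monoid_closed: "is_monoid B \<Longrightarrow> a \<in> bp_carrier B \<Longrightarrow> b \<in> bp_carrier B
      \<Longrightarrow> bp_mult B a b \<in> bp_carrier B"
  and monoid_assoc: "is_monoid B \<Longrightarrow> a \<in> bp_carrier B \<Longrightarrow> b \<in> bp_carrier B
      \<Longrightarrow> c \<in> bp_carrier B \<Longrightarrow> bp_mult B (bp_mult B a b) c = bp_mult B a (bp_mult B b c)"
  and monoid_comm: "is_monoid B \<Longrightarrow> a \<in> bp_carrier B \<Longrightarrow> b \<in> bp_carrier B
      \<Longrightarrow> bp_mult B a b = bp_mult B b a"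
  and monoid_one_mult: "is_monoid B \<Longrightarrow> a \<in> bp_carrier B \<Longrightarrow> bp_mult B (bp_one B) a = a"
  unfolding is_monoid_def by blast+

lemma monoid_mult_one: "is_monoid B \<Longrightarrow> a \<in> bp_carrier B \<Longrightarrow> bp_mult B a (bp_one B) = a"
  by (metis monoid_comm monoid_one monoid_one_mult)

lemma single_NA: "a \<in> bp_carrier B \<Longrightarrow> {#a#} \<in> NA B"
  by (simp add: NA_def)

lemma NA_add: "M \<in> NA B \<Longrightarrow> N \<in> NA B \<Longrightarrow> M + N \<in> NA B"
  by (auto simp: NA_def)

lemma NA_image:
  "M \<in> NA B \<Longrightarrow> (\<And>x. x \<in> bp_carrier B \<Longrightarrow> f x \<in> bp_carrier B) \<Longrightarrow> image_mset f M \<in> NA B"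
  unfolding NA_def by auto

lemma msum_mult_add: "msum_mult B (add_mset a M) N = image_mset (bp_mult B a) N + msum_mult B M N"
  by (simp add: msum_mult_def)

lemma msum_mult_empty [simp]: "msum_mult B {#} N = {#}"
  by (simp add: msum_mult_def)

lemma msum_mult_single_r: "msum_mult B M {#b#} = image_mset (\<lambda>a. bp_mult B a b) M"
  by (induction M) (simp_all add: msum_mult_add)

lemma msum_mult_single_l: "msum_mult B {#a#} N = image_mset (bp_mult B a) N"
  by (simp add: msum_mult_add)

lemma NA_msum_mult: "is_monoid B \<Longrightarrow> M \<in> NA B \<Longrightarrow> N \<in> NA B \<Longrightarrow> msum_mult B M N \<in> NA B"
  unfolding NA_def msum_mult_def by (auto intro: monoid_closed)

lemma gen_equiv_pre_addition:
  assumes mon: "is_monoid B" and SX: "S \<subseteq> NA B \<times> NA B"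
    and add: "\<And>M N P. (M, N) \<in> S \<Longrightarrow> P \<in> NA B \<Longrightarrow> (M + P, N + P) \<in> S \<and> (P + M, P + N) \<in> S"
    and mult: "\<And>M N P. (M, N) \<in> S \<Longrightarrow> P \<in> NA B
      \<Longrightarrow> (msum_mult B M P, msum_mult B N P) \<in> S \<and> (msum_mult B P M, msum_mult B P N) \<in> S"
  shows "pre_addition B (gen_equiv (NA B) S)"
  unfolding pre_addition_def
proof (intro conjI allI impI)
  show "equiv (NA B) (gen_equiv (NA B) S)" by (rule gen_equiv_equiv[OF SX])
  fix M N P Q assume MN: "(M, N) \<in> gen_equiv (NA B) S" and PQ: "(P, Q) \<in> gen_equiv (NA B) S"
  show "(M + P, N + Q) \<in> gen_equiv (NA B) S"
    by (rule gen_equiv_op[OF SX _ _ _ MN PQ]) (simp_all add: NA_add add)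
  show "(msum_mult B M P, msum_mult B N Q) \<in> gen_equiv (NA B) S"
    by (rule gen_equiv_op[OF SX _ _ _ MN PQ]) (simp_all add: NA_msum_mult[OF mon] mult)
qed

lemma pre_addition_equiv: "pre_addition B R \<Longrightarrow> equiv (NA B) R"
  by (simp add: pre_addition_def)

text \<open>Since a pre-addition is reflexive, it is stable under adding or multiplying by a
  fixed formal sum.\<close>

lemma pre_addition_stable:
  assumes R: "pre_addition B R" and MN: "(M, N) \<in> R" and P: "P \<in> NA B"
  shows "(M + P, N + P) \<in> R \<and> (P + M, P + N) \<in> R
    \<and> (msum_mult B M P, msum_mult B N P) \<in> R \<and> (msum_mult B P M, msum_mult B P N) \<in> R"
proof -
  have "(P, P) \<in> R" using pre_addition_equiv[OF R] P by (auto simp: equiv_def refl_on_def)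
  then show ?thesis using R MN unfolding pre_addition_def by blast
qed

lemma bp_monoid: "blueprint B \<Longrightarrow> is_monoid B"
  by (simp add: blueprint_def)

lemma bp_equiv: "blueprint B \<Longrightarrow> equiv (NA B) (bp_rel B)"
  by (simp add: blueprint_def pre_addition_def)

lemma bp_pre_addition: "blueprint B \<Longrightarrow> pre_addition B (bp_rel B)"
  by (simp add: blueprint_def)

lemma rel_mult_r:
  assumes "blueprint B" "(M, N) \<in> bp_rel B" "b \<in> bp_carrier B"
  shows "(image_mset (\<lambda>a. bp_mult B a b) M, image_mset (\<lambda>a. bp_mult B a b) N) \<in> bp_rel B"
  using pre_addition_stable[OF bp_pre_addition assms(2) single_NA] assms
  by (simp add: msum_mult_single_r)

lemma rel_mult_l:
  assumes "blueprint B" "(M, N) \<in> bp_rel B" "b \<in> bp_carrier B"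
  shows "(image_mset (bp_mult B b) M, image_mset (bp_mult B b) N) \<in> bp_rel B"
  using pre_addition_stable[OF bp_pre_addition assms(2) single_NA] assms
  by (simp add: msum_mult_single_l)

lemma zero_mult:
  assumes "blueprint B" "is_zero B e" "x \<in> bp_carrier B"
  shows "is_zero B (bp_mult B e x)"
  using rel_mult_r[OF assms(1) _ assms(3), of "{#e#}" "{#}"] assms
  by (auto simp: is_zero_def intro: monoid_closed bp_monoid)

subsection \<open>Linear extensions\<close>

text \<open>Generators of the linear extension are pairs of formal sums matched termwise by \<open>r\<close>.\<close>

lemma lin_gen_NA: "r \<subseteq> bp_carrier B \<times> bp_carrier B \<Longrightarrow> lin_gen r \<subseteq> NA B \<times> NA B"
  unfolding lin_gen_def NA_def by fastforce

lemma single_lin_gen: "(a, b) \<in> r \<Longrightarrow> ({#a#}, {#b#}) \<in> lin_gen r"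
  unfolding lin_gen_def by (rule CollectI, rule exI[of _ "[(a, b)]"]) simp

lemma empty_lin_gen: "({#}, {#}) \<in> lin_gen r"
  unfolding lin_gen_def by (rule CollectI, rule exI[of _ "[]"]) simp

lemma lin_gen_refl:
  assumes "refl_on (bp_carrier B) r" "M \<in> NA B"
  shows "(M, M) \<in> lin_gen r"
proof -
  obtain xs where xs: "mset xs = M" using ex_mset by blast
  let ?ps = "map (\<lambda>x. (x, x)) xs"
  have "M = mset (map fst ?ps)" "M = mset (map snd ?ps)" using xs by (simp_all add: comp_def)
  moreover have "set ?ps \<subseteq> r" using assms xs by (auto simp: refl_on_def NA_def)
  ultimately show ?thesis unfolding lin_gen_def by blast
qed

lemma lin_gen_add:
  assumes "(M, N) \<in> lin_gen r" "(P, Q) \<in> lin_gen r"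
  shows "(M + P, N + Q) \<in> lin_gen r"
proof -
  obtain ps where ps: "M = mset (map fst ps)" "N = mset (map snd ps)" "set ps \<subseteq> r"
    using assms(1) unfolding lin_gen_def by blast
  obtain qs where qs: "P = mset (map fst qs)" "Q = mset (map snd qs)" "set qs \<subseteq> r"
    using assms(2) unfolding lin_gen_def by blast
  have "M + P = mset (map fst (ps @ qs))" "N + Q = mset (map snd (ps @ qs))" using ps qs by auto
  moreover have "set (ps @ qs) \<subseteq> r" using ps qs by auto
  ultimately show ?thesis unfolding lin_gen_def by blast
qed

text \<open>The bilinear product of two termwise matched sums is termwise matched by the list of
  all pairwise products.\<close>

definition pair_products :: "('a, 'b) blueprint_scheme \<Rightarrow> ('a \<times> 'a) list \<Rightarrow> ('a \<times> 'a) list \<Rightarrow> ('a \<times> 'a) list" where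
  "pair_products B ps qs =
     concat (map (\<lambda>p. map (\<lambda>q. (bp_mult B (fst p) (fst q), bp_mult B (snd p) (snd q))) qs) ps)"

lemma pair_products_fst:
  "mset (map fst (pair_products B ps qs)) = msum_mult B (mset (map fst ps)) (mset (map fst qs))"
  unfolding pair_products_def
  by (induction ps) (simp_all add: msum_mult_add multiset.map_comp comp_def)

lemma pair_products_snd:
  "mset (map snd (pair_products B ps qs)) = msum_mult B (mset (map snd ps)) (mset (map snd qs))"
  unfolding pair_products_def
  by (induction ps) (simp_all add: msum_mult_add multiset.map_comp comp_def)

lemma lin_gen_mult:
  assumes "(M, N) \<in> lin_gen r" "(P, Q) \<in> lin_gen r"
    and compat: "\<And>x x' y y'. (x, x') \<in> r \<Longrightarrow> (y, y') \<in> r \<Longrightarrow> (bp_mult B x y, bp_mult B x' y') \<in> r"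
  shows "(msum_mult B M P, msum_mult B N Q) \<in> lin_gen r"
proof -
  obtain ps where ps: "M = mset (map fst ps)" "N = mset (map snd ps)" "set ps \<subseteq> r"
    using assms(1) unfolding lin_gen_def by blast
  obtain qs where qs: "P = mset (map fst qs)" "Q = mset (map snd qs)" "set qs \<subseteq> r"
    using assms(2) unfolding lin_gen_def by blast
  have "msum_mult B M P = mset (map fst (pair_products B ps qs))"
    "msum_mult B N Q = mset (map snd (pair_products B ps qs))"
    using ps qs by (metis pair_products_fst, metis pair_products_snd)
  moreover have "set (pair_products B ps qs) \<subseteq> r"
    using ps(3) qs(3) compat by (fastforce simp: pair_products_def)
  ultimately show ?thesis unfolding lin_gen_def by blast
qed

lemma lin_gen_map:
  assumes "(M, N) \<in> lin_gen r" "\<And>u v. (u, v) \<in> r \<Longrightarrow> (f u, f v) \<in> r'"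
  shows "(image_mset f M, image_mset f N) \<in> lin_gen r'"
proof -
  obtain ps where ps: "M = mset (map fst ps)" "N = mset (map snd ps)" "set ps \<subseteq> r"
    using assms(1) unfolding lin_gen_def by blast
  let ?qs = "map (\<lambda>(u, v). (f u, f v)) ps"
  have "image_mset f M = mset (map fst ?qs)" "image_mset f N = mset (map snd ?qs)"
    using ps by (simp_all add: multiset.map_comp comp_def case_prod_beta)
  moreover have "set ?qs \<subseteq> r'" using ps(3) assms(2) by auto
  ultimately show ?thesis unfolding lin_gen_def by blast
qed

lemma lin_gen_sub_lin_ext: "lin_gen r \<subseteq> lin_ext B r"
  unfolding lin_ext_def by (rule gen_equiv_sub)

lemma lin_ext_equiv: "r \<subseteq> bp_carrier B \<times> bp_carrier B \<Longrightarrow> equiv (NA B) (lin_ext B r)"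
  unfolding lin_ext_def by (rule gen_equiv_equiv, rule lin_gen_NA)

lemma lin_ext_map:
  assumes r: "r \<subseteq> bp_carrier B \<times> bp_carrier B" and r': "r' \<subseteq> bp_carrier B \<times> bp_carrier B"
    and f: "\<And>x. x \<in> bp_carrier B \<Longrightarrow> f x \<in> bp_carrier B"
    and fr: "\<And>u v. (u, v) \<in> r \<Longrightarrow> (f u, f v) \<in> r'"
    and MN: "(M, N) \<in> lin_ext B r"
  shows "(image_mset f M, image_mset f N) \<in> lin_ext B r'"
  using lin_ext_equiv[OF r']
proof (rule gen_equiv_map[where f = "image_mset f"])
  show "image_mset f M \<in> NA B" if "M \<in> NA B" for M using that f by (rule NA_image)
  show "lin_gen r \<subseteq> NA B \<times> NA B" by (rule lin_gen_NA[OF r])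
  show "(M, N) \<in> gen_equiv (NA B) (lin_gen r)" using MN by (simp add: lin_ext_def)
  show "(image_mset f P, image_mset f Q) \<in> lin_ext B r'" if "(P, Q) \<in> lin_gen r" for P Q
    using lin_gen_map[where f = f, OF that fr] lin_gen_sub_lin_ext by blast
qed

lemma lin_ext_pre_addition:
  assumes mon: "is_monoid B" and eq: "equiv (bp_carrier B) r"
    and compat: "\<And>x x' y y'. (x, x') \<in> r \<Longrightarrow> (y, y') \<in> r \<Longrightarrow> (bp_mult B x y, bp_mult B x' y') \<in> r"
  shows "pre_addition B (lin_ext B r)"
proof -
  have rC: "r \<subseteq> bp_carrier B \<times> bp_carrier B" and rr: "refl_on (bp_carrier B) r"
    using eq by (auto simp: equiv_def)
  note refl = lin_gen_refl[OF rr]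
  show ?thesis unfolding lin_ext_def
  proof (rule gen_equiv_pre_addition[OF mon lin_gen_NA[OF rC]])
    fix M N P assume MN: "(M, N) \<in> lin_gen r" and P: "P \<in> NA B"
    show "(M + P, N + P) \<in> lin_gen r \<and> (P + M, P + N) \<in> lin_gen r"
      using lin_gen_add[OF MN refl[OF P]] lin_gen_add[OF refl[OF P] MN] by blast
    show "(msum_mult B M P, msum_mult B N P) \<in> lin_gen r
      \<and> (msum_mult B P M, msum_mult B P N) \<in> lin_gen r"
      using lin_gen_mult[OF MN refl[OF P] compat] lin_gen_mult[OF refl[OF P] MN compat] by blast
  qed
qed

subsection \<open>Maximal ideals are prime\<close>

text \<open>Multiplication by \<open>b\<close> carries the relation \<open>\<sim>\<^sub>J\<close> into \<open>\<sim>\<^sub>I\<close> whenever it carries \<open>J\<close>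
  into \<open>I\<close>: it respects the pre-addition and maps \<open>\<sim>\<^sup>J\<close> into \<open>\<sim>\<^sup>I\<close>.\<close>

lemma sim_sub_mult:
  assumes bp: "blueprint B" and b: "b \<in> bp_carrier B"
    and JI: "\<And>c. c \<in> J \<Longrightarrow> bp_mult B c b \<in> I"
    and xc: "(x, c) \<in> sim_sub B J"
  shows "(bp_mult B x b, bp_mult B c b) \<in> sim_sub B I"
proof -
  have mon: "is_monoid B" using bp by (rule bp_monoid)
  let ?f = "image_mset (\<lambda>y. bp_mult B y b)"
  let ?LJ = "lin_ext B (sim_sup B J)" and ?LI = "lin_ext B (sim_sup B I)"
  have x: "x \<in> bp_carrier B" and c: "c \<in> bp_carrier B"
    and chain: "({#x#}, {#c#}) \<in> (bp_rel B O ?LJ)\<^sup>+ O bp_rel B"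
    using xc unfolding sim_sub_def by auto
  have f_rel: "(?f M, ?f N) \<in> bp_rel B" if "(M, N) \<in> bp_rel B" for M N
    using rel_mult_r[OF bp that b] .
  have f_lin: "(?f M, ?f N) \<in> ?LI" if "(M, N) \<in> ?LJ" for M N
    by (rule lin_ext_map[OF _ _ _ _ that]) (auto simp: sim_sup_def JI b mon monoid_closed)
  obtain K where K1: "({#x#}, K) \<in> (bp_rel B O ?LJ)\<^sup>+" and K2: "(K, {#c#}) \<in> bp_rel B"
    using chain by blast
  have "(?f {#x#}, ?f K) \<in> (bp_rel B O ?LI)\<^sup>+"
    by (rule trancl_map[OF K1]) (use f_rel f_lin in blast)
  with f_rel[OF K2] have "({#bp_mult B x b#}, {#bp_mult B c b#}) \<in> (bp_rel B O ?LI)\<^sup>+ O bp_rel B"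
    by auto
  then show ?thesis unfolding sim_sub_def using x c b mon monoid_closed by auto
qed

lemma colon_ideal:
  assumes bp: "blueprint B" and I: "ideal B I" and b: "b \<in> bp_carrier B"
  shows "ideal B {c \<in> bp_carrier B. bp_mult B c b \<in> I}" (is "ideal B ?J")
proof -
  have mon: "is_monoid B" using bp by (rule bp_monoid)
  note I_def = I[unfolded ideal_def]
  show ?thesis unfolding ideal_def
  proof (intro conjI allI ballI impI)
    show "?J \<subseteq> bp_carrier B" by blast
    fix c d assume c: "c \<in> ?J" and d: "d \<in> bp_carrier B"
    then have cC: "c \<in> bp_carrier B" and cb: "bp_mult B c b \<in> I" by auto
    have "bp_mult B (bp_mult B c d) b = bp_mult B c (bp_mult B b d)"
      using cC d b by (simp add: mon monoid_assoc monoid_comm[of B d b])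
    also have "\<dots> = bp_mult B (bp_mult B c b) d"
      using cC d b by (simp add: mon monoid_assoc)
    finally show "bp_mult B c d \<in> ?J"
      using cb d I_def monoid_closed[OF mon cC d] by simp
  next
    fix e assume "is_zero B e"
    then show "e \<in> ?J" using zero_mult[OF bp _ b] I_def by (auto simp: is_zero_def)
  next
    fix x c assume xc: "(x, c) \<in> sim_sub B ?J \<and> c \<in> ?J"
    have "(bp_mult B x b, bp_mult B c b) \<in> sim_sub B I"
      by (rule sim_sub_mult[OF bp b _ conjunct1[OF xc]]) simp
    moreover have "bp_mult B c b \<in> I" using xc by simp
    moreover have "x \<in> bp_carrier B" using xc by (simp add: sim_sub_def)
    ultimately show "x \<in> ?J" using I_def by blast
  qed
qed

theorem maximal_ideal_prime:
  assumes bp: "blueprint B" and mx: "maximal_ideal B I"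
  shows "prime_ideal B I"
proof -
  have mon: "is_monoid B" using bp by (rule bp_monoid)
  have I: "ideal B I" and proper: "I \<noteq> bp_carrier B"
    and max: "\<And>J. ideal B J \<Longrightarrow> J \<noteq> bp_carrier B \<Longrightarrow> I \<subseteq> J \<Longrightarrow> J = I"
    using mx unfolding maximal_ideal_def by auto
  have I_mult: "\<And>a b. a \<in> I \<Longrightarrow> b \<in> bp_carrier B \<Longrightarrow> bp_mult B a b \<in> I"
    and I_sub: "I \<subseteq> bp_carrier B"
    using I unfolding ideal_def by auto
  have one: "bp_one B \<notin> I"
  proof
    assume "bp_one B \<in> I"
    then have "a \<in> I" if "a \<in> bp_carrier B" for a
      using I_mult[of "bp_one B" a] that monoid_one_mult[OF mon that] by simp
    then show False using proper I_sub by blast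
  qed
  have "bp_mult B a b \<notin> I" if a: "a \<in> bp_carrier B - I" and b: "b \<in> bp_carrier B - I" for a b
  proof
    assume ab: "bp_mult B a b \<in> I"
    let ?J = "{c \<in> bp_carrier B. bp_mult B c b \<in> I}"
    have "bp_one B \<notin> ?J" using b monoid_one_mult[OF mon] by auto
    then have "?J \<noteq> bp_carrier B" using monoid_one[OF mon] by blast
    moreover have "I \<subseteq> ?J" using I_mult I_sub b by blast
    moreover have "ideal B ?J" using colon_ideal[OF bp I] b by blast
    ultimately have "?J = I" using max by blast
    then show False using a ab by blast
  qed
  moreover have "bp_mult B a b \<in> bp_carrier B" if "a \<in> bp_carrier B" "b \<in> bp_carrier B" for a b
    using monoid_closed[OF mon that] .
  ultimately show ?thesis unfolding prime_ideal_def using I one monoid_one[OF mon] by blast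
qed

lemma congruence_equiv: "congruence B r \<Longrightarrow> equiv (bp_carrier B) r"
  by (simp add: congruence_def)

lemma congruence_sub: "congruence B r \<Longrightarrow> r \<subseteq> bp_carrier B \<times> bp_carrier B"
  by (simp add: congruence_def equiv_def refl_on_def)

lemma congruence_refl: "congruence B r \<Longrightarrow> x \<in> bp_carrier B \<Longrightarrow> (x, x) \<in> r"
  by (simp add: congruence_def equiv_def refl_on_def)

lemma congruence_sym: "congruence B r \<Longrightarrow> (x, y) \<in> r \<Longrightarrow> (y, x) \<in> r"
  unfolding congruence_def equiv_def sym_def by blast

lemma congruence_trans: "congruence B r \<Longrightarrow> (x, y) \<in> r \<Longrightarrow> (y, w) \<in> r \<Longrightarrow> (x, w) \<in> r"
  unfolding congruence_def equiv_def trans_def by blast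

lemma rel_sub_R_ext: "bp_rel B \<subseteq> R_ext B r"
  unfolding R_ext_def using gen_equiv_sub by blast

lemma lin_ext_sub_R_ext: "lin_ext B r \<subseteq> R_ext B r"
  unfolding R_ext_def using gen_equiv_sub by blast

lemma R_ext_equiv:
  assumes "blueprint B" "r \<subseteq> bp_carrier B \<times> bp_carrier B"
  shows "equiv (NA B) (R_ext B r)"
  unfolding R_ext_def
  by (rule gen_equiv_equiv) (use bp_equiv[OF assms(1)] lin_ext_equiv[OF assms(2)] in \<open>auto simp: equiv_def\<close>)

lemma congruence_single_iff:
  assumes "congruence B r" "a \<in> bp_carrier B" "b \<in> bp_carrier B"
  shows "({#a#}, {#b#}) \<in> R_ext B r \<longleftrightarrow> (a, b) \<in> r"
  using assms unfolding congruence_def by blast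

text \<open>A congruence is compatible with multiplication, by (C1) applied to one-term sums.\<close>

lemma congruence_compat:
  assumes bp: "blueprint B" and cg: "congruence B r"
    and xx: "(x, x') \<in> r" and yy: "(y, y') \<in> r"
  shows "(bp_mult B x y, bp_mult B x' y') \<in> r"
proof -
  have mon: "is_monoid B" using bp by (rule bp_monoid)
  have C: "x \<in> bp_carrier B" "x' \<in> bp_carrier B" "y \<in> bp_carrier B" "y' \<in> bp_carrier B"
    using xx yy congruence_sub[OF cg] by auto
  have "(msum_mult B {#x#} {#y#}, msum_mult B {#x'#} {#y'#}) \<in> lin_ext B r"
    using cg single_lin_gen[OF xx] single_lin_gen[OF yy] lin_gen_sub_lin_ext
    unfolding congruence_def pre_addition_def by blast
  then have "({#bp_mult B x y#}, {#bp_mult B x' y'#}) \<in> R_ext B r"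
    using lin_ext_sub_R_ext by (auto simp: msum_mult_single_l)
  then show ?thesis
    using congruence_single_iff[OF cg] monoid_closed[OF mon] C by blast
qed

text \<open>For a congruence, \<open>\<sim>\<^sub>\<R>\<close> is itself a pre-addition: it is generated by the union of two
  pre-additions.\<close>

lemma R_ext_pre_addition:
  assumes bp: "blueprint B" and cg: "congruence B r"
  shows "pre_addition B (R_ext B r)"
proof -
  have pl: "pre_addition B (lin_ext B r)" using cg by (simp add: congruence_def)
  have pr: "pre_addition B (bp_rel B)" using bp by (rule bp_pre_addition)
  show ?thesis unfolding R_ext_def
  proof (rule gen_equiv_pre_addition[OF bp_monoid[OF bp]])
    show "bp_rel B \<union> lin_ext B r \<subseteq> NA B \<times> NA B"
      using pre_addition_equiv[OF pl] pre_addition_equiv[OF pr] by (auto simp: equiv_def)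
    fix M N P assume "(M, N) \<in> bp_rel B \<union> lin_ext B r" and P: "P \<in> NA B"
    then show "(M + P, N + P) \<in> bp_rel B \<union> lin_ext B r \<and> (P + M, P + N) \<in> bp_rel B \<union> lin_ext B r"
      and "(msum_mult B M P, msum_mult B N P) \<in> bp_rel B \<union> lin_ext B r
        \<and> (msum_mult B P M, msum_mult B P N) \<in> bp_rel B \<union> lin_ext B r"
      using pre_addition_stable[OF pl _ P] pre_addition_stable[OF pr _ P] by blast+
  qed
qed

subsection \<open>The colon congruence\<close>

lemma R_ext_mult_map:
  assumes bp: "blueprint B" and cg: "congruence B r" and a: "a \<in> bp_carrier B"
    and r': "r' \<subseteq> bp_carrier B \<times> bp_carrier B"
    and r'r: "\<And>x y. (x, y) \<in> r' \<Longrightarrow> (bp_mult B a x, bp_mult B a y) \<in> r"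
    and MN: "(M, N) \<in> R_ext B r'"
  shows "(image_mset (bp_mult B a) M, image_mset (bp_mult B a) N) \<in> R_ext B r"
  using R_ext_equiv[OF bp congruence_sub[OF cg]]
proof (rule gen_equiv_map[where f = "image_mset (bp_mult B a)"])
  have mon: "is_monoid B" using bp by (rule bp_monoid)
  show "image_mset (bp_mult B a) M \<in> NA B" if "M \<in> NA B" for M
    using that by (rule NA_image) (rule monoid_closed[OF mon a])
  show "bp_rel B \<union> lin_ext B r' \<subseteq> NA B \<times> NA B"
    using bp_equiv[OF bp] lin_ext_equiv[OF r'] by (auto simp: equiv_def)
  show "(M, N) \<in> gen_equiv (NA B) (bp_rel B \<union> lin_ext B r')" using MN by (simp add: R_ext_def)
  fix P Q assume "(P, Q) \<in> bp_rel B \<union> lin_ext B r'"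
  then show "(image_mset (bp_mult B a) P, image_mset (bp_mult B a) Q) \<in> R_ext B r"
  proof
    assume "(P, Q) \<in> bp_rel B"
    then show ?thesis using rel_mult_l[OF bp _ a] rel_sub_R_ext by blast
  next
    assume PQ: "(P, Q) \<in> lin_ext B r'"
    have "(image_mset (bp_mult B a) P, image_mset (bp_mult B a) Q) \<in> lin_ext B r"
      by (rule lin_ext_map[OF r' congruence_sub[OF cg] _ r'r PQ]) (rule monoid_closed[OF mon a])
    then show ?thesis using lin_ext_sub_R_ext by blast
  qed
qed

definition colon_cong :: "('a, 'b) blueprint_scheme \<Rightarrow> ('a \<times> 'a) set \<Rightarrow> 'a \<Rightarrow> ('a \<times> 'a) set" where
  "colon_cong B r a =
     {(x, y). x \<in> bp_carrier B \<and> y \<in> bp_carrier B \<and> (bp_mult B a x, bp_mult B a y) \<in> r}"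

lemma colon_cong_compat:
  assumes bp: "blueprint B" and cg: "congruence B r" and a: "a \<in> bp_carrier B"
    and xx: "(x, x') \<in> colon_cong B r a" and yy: "(y, y') \<in> colon_cong B r a"
  shows "(bp_mult B x y, bp_mult B x' y') \<in> colon_cong B r a"
proof -
  have mon: "is_monoid B" using bp by (rule bp_monoid)
  have C: "x \<in> bp_carrier B" "x' \<in> bp_carrier B" "y \<in> bp_carrier B" "y' \<in> bp_carrier B"
    and ax: "(bp_mult B a x, bp_mult B a x') \<in> r" and ay: "(bp_mult B a y, bp_mult B a y') \<in> r"
    using xx yy by (auto simp: colon_cong_def)
  note compat = congruence_compat[OF bp cg] and refl = congruence_refl[OF cg]
  have "(bp_mult B (bp_mult B a x) y, bp_mult B (bp_mult B a x') y) \<in> r"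
    using compat[OF ax refl[OF C(3)]] .
  then have left: "(bp_mult B a (bp_mult B x y), bp_mult B x' (bp_mult B a y)) \<in> r"
    using a C by (metis mon monoid_assoc monoid_comm)
  have "(bp_mult B x' (bp_mult B a y), bp_mult B x' (bp_mult B a y')) \<in> r"
    using compat[OF refl[OF C(2)] ay] .
  then have right: "(bp_mult B x' (bp_mult B a y), bp_mult B a (bp_mult B x' y')) \<in> r"
    using a C by (metis mon monoid_assoc monoid_comm)
  have "(bp_mult B a (bp_mult B x y), bp_mult B a (bp_mult B x' y')) \<in> r"
    using congruence_trans[OF cg left right] .
  then show ?thesis using C by (simp add: colon_cong_def monoid_closed[OF mon])
qed

lemma colon_congruence:
  assumes bp: "blueprint B" and cg: "congruence B r" and a: "a \<in> bp_carrier B"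
  shows "congruence B (colon_cong B r a)"
proof -
  have mon: "is_monoid B" using bp by (rule bp_monoid)
  have sub: "colon_cong B r a \<subseteq> bp_carrier B \<times> bp_carrier B" by (auto simp: colon_cong_def)
  have eq: "equiv (bp_carrier B) (colon_cong B r a)"
  proof (rule equivI)
    show "colon_cong B r a \<subseteq> bp_carrier B \<times> bp_carrier B" by (rule sub)
    show "refl_on (bp_carrier B) (colon_cong B r a)"
      using sub congruence_refl[OF cg monoid_closed[OF mon a]]
      by (auto simp: refl_on_def colon_cong_def)
    show "sym (colon_cong B r a)"
      using congruence_sym[OF cg] by (auto simp: sym_def colon_cong_def)
    show "trans (colon_cong B r a)"
    proof (rule transI)
      fix x y w assume "(x, y) \<in> colon_cong B r a" "(y, w) \<in> colon_cong B r a"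
      then show "(x, w) \<in> colon_cong B r a"
        using congruence_trans[OF cg] by (auto simp: colon_cong_def)
    qed
  qed
  have pre: "pre_addition B (lin_ext B (colon_cong B r a))"
    using lin_ext_pre_addition[OF mon eq colon_cong_compat[OF bp cg a]] .
  have single: "({#x#}, {#y#}) \<in> R_ext B (colon_cong B r a) \<longleftrightarrow> (x, y) \<in> colon_cong B r a"
    if x: "x \<in> bp_carrier B" and y: "y \<in> bp_carrier B" for x y
  proof
    assume "({#x#}, {#y#}) \<in> R_ext B (colon_cong B r a)"
    then have "(image_mset (bp_mult B a) {#x#}, image_mset (bp_mult B a) {#y#}) \<in> R_ext B r"
      by (rule R_ext_mult_map[OF bp cg a sub, rotated]) (simp add: colon_cong_def)
    then show "(x, y) \<in> colon_cong B r a"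
      using congruence_single_iff[OF cg] x y monoid_closed[OF mon a] by (simp add: colon_cong_def)
  next
    assume "(x, y) \<in> colon_cong B r a"
    then have "({#x#}, {#y#}) \<in> lin_ext B (colon_cong B r a)"
      using lin_gen_sub_lin_ext by (blast dest: single_lin_gen)
    then show "({#x#}, {#y#}) \<in> R_ext B (colon_cong B r a)"
      using lin_ext_sub_R_ext by blast
  qed
  have "{(x, y). x \<in> bp_carrier B \<and> y \<in> bp_carrier B
      \<and> ({#x#}, {#y#}) \<in> R_ext B (colon_cong B r a)} = colon_cong B r a"
    using single sub by auto
  then show ?thesis unfolding congruence_def using eq pre by blast
qed

lemma zeros_congruent:
  assumes bp: "blueprint B" and cg: "congruence B r" and e: "is_zero B e" and z: "is_zero B z"
  shows "(e, z) \<in> r"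
proof -
  have "({#e#}, {#}) \<in> bp_rel B" "({#z#}, {#}) \<in> bp_rel B" using e z by (auto simp: is_zero_def)
  then have "({#e#}, {#z#}) \<in> bp_rel B"
    using bp_equiv[OF bp] unfolding equiv_def sym_def trans_def by blast
  then have "({#e#}, {#z#}) \<in> R_ext B r" using rel_sub_R_ext by blast
  moreover have "e \<in> bp_carrier B" "z \<in> bp_carrier B" using e z by (auto simp: is_zero_def)
  ultimately show ?thesis using congruence_single_iff[OF cg] by blast
qed

lemma zero_absorbs:
  assumes bp: "blueprint B" and cg: "congruence B r" and z: "is_zero B z" and x: "x \<in> bp_carrier B"
  shows "(bp_mult B x z, z) \<in> r"
proof -
  have "bp_mult B x z = bp_mult B z x"
    using x z monoid_comm[OF bp_monoid[OF bp]] by (auto simp: is_zero_def)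
  then show ?thesis using zeros_congruent[OF bp cg zero_mult[OF bp z x] z] by simp
qed

text \<open>In a proper congruence, \<open>1\<close> is not congruent to a zero: otherwise every \<open>x = x 1\<close> would
  be congruent to \<open>x z \<sim> z\<close>, so all elements would be congruent.\<close>

lemma proper_congruence_one_not_zero:
  assumes bp: "blueprint B" and pc: "proper_congruence B r" and z: "is_zero B z"
  shows "(bp_one B, z) \<notin> r"
proof
  assume one_z: "(bp_one B, z) \<in> r"
  have cg: "congruence B r" using pc by (simp add: proper_congruence_def)
  have mon: "is_monoid B" using bp by (rule bp_monoid)
  have to_z: "(x, z) \<in> r" if x: "x \<in> bp_carrier B" for x
  proof -
    have "(bp_mult B x (bp_one B), bp_mult B x z) \<in> r"
      by (rule congruence_compat[OF bp cg congruence_refl[OF cg x] one_z])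
    then have "(x, bp_mult B x z) \<in> r" using monoid_mult_one[OF mon x] by simp
    then show ?thesis using congruence_trans[OF cg _ zero_absorbs[OF bp cg z x]] by blast
  qed
  obtain x y where "x \<in> bp_carrier B" "y \<in> bp_carrier B" "(x, y) \<notin> r"
    using pc by (auto simp: proper_congruence_def)
  then show False using to_z congruence_sym[OF cg] congruence_trans[OF cg] by blast
qed

text \<open>Cancellation in a maximal congruence: an element not congruent to zero can be cancelled,
  because the colon congruence contains \<open>\<sim>\<close> and is proper, hence equals \<open>\<sim>\<close>.\<close>

lemma maximal_congruence_cancel:
  assumes bp: "blueprint B" and z: "is_zero B z" and mc: "maximal_congruence B r"
    and a: "a \<in> bp_carrier B" and az: "(a, z) \<notin> r"
    and x: "x \<in> bp_carrier B" and y: "y \<in> bp_carrier B"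
    and axy: "(bp_mult B a x, bp_mult B a y) \<in> r"
  shows "(x, y) \<in> r"
proof -
  have mon: "is_monoid B" using bp by (rule bp_monoid)
  have cg: "congruence B r"
    and max: "\<And>r'. proper_congruence B r' \<Longrightarrow> r \<subseteq> r' \<Longrightarrow> r' = r"
    using mc by (auto simp: maximal_congruence_def proper_congruence_def)
  have zC: "z \<in> bp_carrier B" using z by (simp add: is_zero_def)
  have "r \<subseteq> colon_cong B r a"
  proof
    fix p assume "p \<in> r"
    then obtain u v where p: "p = (u, v)" "(u, v) \<in> r" by (cases p) auto
    then have "u \<in> bp_carrier B" "v \<in> bp_carrier B" using congruence_sub[OF cg] by auto
    then show "p \<in> colon_cong B r a"
      using p congruence_compat[OF bp cg congruence_refl[OF cg a] p(2)] by (simp add: colon_cong_def)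
  qed
  moreover have "(bp_one B, z) \<notin> colon_cong B r a"
  proof
    assume "(bp_one B, z) \<in> colon_cong B r a"
    then have "(a, bp_mult B a z) \<in> r"
      by (simp add: colon_cong_def monoid_mult_one[OF mon a])
    then show False using az congruence_trans[OF cg _ zero_absorbs[OF bp cg z a]] by blast
  qed
  then have "proper_congruence B (colon_cong B r a)"
    using colon_congruence[OF bp cg a] monoid_one[OF mon] zC
    unfolding proper_congruence_def by blast
  ultimately have "colon_cong B r a = r" using max by blast
  moreover have "(x, y) \<in> colon_cong B r a" using x y axy by (simp add: colon_cong_def)
  ultimately show ?thesis by simp
qed

subsection \<open>The quotient blueprint\<close>

lemma quotient_simps:
  "bp_carrier (quotient_bp B r) = bp_carrier B // r"
  "bp_mult (quotient_bp B r) = bp_mult (quot_monoid B r)"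
  "bp_one (quotient_bp B r) = r``{bp_one B}"
  "bp_rel (quotient_bp B r) = \<Inter>{P. pre_addition (quot_monoid B r) P \<and>
     {(image_mset (\<lambda>a. r``{a}) M, image_mset (\<lambda>a. r``{a}) N) | M N. (M, N) \<in> bp_rel B} \<subseteq> P}"
  "bp_carrier (quot_monoid B r) = bp_carrier B // r"
  by (simp_all add: quotient_bp_def quot_monoid_def)

lemma quot_mult_class:
  assumes bp: "blueprint B" and cg: "congruence B r"
    and x: "x \<in> bp_carrier B" and y: "y \<in> bp_carrier B"
  shows "bp_mult (quot_monoid B r) (r``{x}) (r``{y}) = r``{bp_mult B x y}"
proof -
  have "x \<in> r``{x}" "y \<in> r``{y}" using x y congruence_refl[OF cg] by auto
  then have "(x, SOME a. a \<in> r``{x}) \<in> r" "(y, SOME a. a \<in> r``{y}) \<in> r"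
    by (metis Image_singleton_iff someI)+
  then have "(bp_mult B x y, bp_mult B (SOME a. a \<in> r``{x}) (SOME a. a \<in> r``{y})) \<in> r"
    by (rule congruence_compat[OF bp cg])
  then have "r``{bp_mult B x y} = r``{bp_mult B (SOME a. a \<in> r``{x}) (SOME a. a \<in> r``{y})}"
    by (rule equiv_class_eq[OF congruence_equiv[OF cg]])
  then show ?thesis unfolding quot_monoid_def by simp
qed

lemma class_image_eq_lin_gen:
  assumes eq: "equiv (bp_carrier B) r"
  shows "M \<in> NA B \<Longrightarrow> N \<in> NA B \<Longrightarrow> image_mset (\<lambda>x. r``{x}) M = image_mset (\<lambda>x. r``{x}) N
    \<Longrightarrow> (M, N) \<in> lin_gen r"
proof (induction M arbitrary: N)
  case empty
  then show ?case using empty_lin_gen by simp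
next
  case (add x M)
  then have "image_mset (\<lambda>x. r``{x}) N = add_mset (r``{x}) (image_mset (\<lambda>x. r``{x}) M)" by simp
  then obtain N1 y where N: "N = add_mset y N1" "r``{y} = r``{x}"
    "image_mset (\<lambda>x. r``{x}) N1 = image_mset (\<lambda>x. r``{x}) M"
    using msed_map_invR[of "\<lambda>x. r``{x}" N] by blast
  have C: "M \<in> NA B" "N1 \<in> NA B" "x \<in> bp_carrier B" "y \<in> bp_carrier B"
    using add.prems N(1) by (auto simp: NA_def)
  have "(M, N1) \<in> lin_gen r" using add.IH[OF C(1) C(2)] N(3) by simp
  moreover have "(x, y) \<in> r" using eq_equiv_class_iff[OF eq C(3) C(4)] N(2) by simp
  ultimately show ?case using lin_gen_add[OF single_lin_gen] N(1) by fastforce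
qed

lemma class_image_surj:
  assumes eq: "equiv (bp_carrier B) r" and X: "X \<in> NA (quot_monoid B r)"
  shows "\<exists>M \<in> NA B. image_mset (\<lambda>a. r``{a}) M = X"
proof -
  let ?rep = "\<lambda>A. SOME a. a \<in> A"
  have rep: "?rep A \<in> bp_carrier B \<and> r``{?rep A} = A" if "A \<in># X" for A
  proof -
    have "A \<in> bp_carrier B // r" using X that by (auto simp: NA_def quotient_simps)
    then obtain x where A: "A = r``{x}" "x \<in> bp_carrier B" by (rule quotientE)
    then have "x \<in> A" using eq by (auto simp: equiv_def refl_on_def)
    then have "?rep A \<in> A" by (rule someI)
    then show ?thesis using A eq by (auto simp: equiv_class_eq_iff)
  qed
  have "image_mset ?rep X \<in> NA B" using rep by (auto simp: NA_def)
  moreover have "image_mset (\<lambda>a. r``{a}) (image_mset ?rep X) = X"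
    using rep by (simp add: multiset.map_comp comp_def image_mset_cong[of X _ id])
  ultimately show ?thesis by blast
qed

lemma quot_msum_mult:
  assumes bp: "blueprint B" and cg: "congruence B r" and M: "M \<in> NA B" and N: "N \<in> NA B"
  shows "msum_mult (quot_monoid B r) (image_mset (\<lambda>a. r``{a}) M) (image_mset (\<lambda>a. r``{a}) N)
    = image_mset (\<lambda>a. r``{a}) (msum_mult B M N)"
  using M
proof (induction M)
  case empty then show ?case by simp
next
  case (add x M)
  have x: "x \<in> bp_carrier B" and M: "M \<in> NA B" using add.prems by (auto simp: NA_def)
  have "image_mset (bp_mult (quot_monoid B r) (r``{x})) (image_mset (\<lambda>a. r``{a}) N)
      = image_mset (\<lambda>a. r``{a}) (image_mset (bp_mult B x) N)"
    unfolding multiset.map_comp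
    by (rule image_mset_cong) (use N quot_mult_class[OF bp cg x] in \<open>auto simp: NA_def\<close>)
  then show ?case using add.IH[OF M] by (simp add: msum_mult_add)
qed

text \<open>The image of \<open>\<sim>\<^sub>\<R>\<close> in formal sums of classes; it is a pre-addition on \<open>A/\<sim>\<close> containing
  the image of the pre-addition of \<open>B\<close>, so it contains the pre-addition of \<open>B/\<sim>\<close>.\<close>

definition R_ext_image :: "('a, 'b) blueprint_scheme \<Rightarrow> ('a \<times> 'a) set \<Rightarrow> ('a set multiset \<times> 'a set multiset) set" where
  "R_ext_image B r =
     {(image_mset (\<lambda>a. r``{a}) M, image_mset (\<lambda>a. r``{a}) N) | M N. (M, N) \<in> R_ext B r}"

lemma R_ext_image_equiv:
  assumes bp: "blueprint B" and cg: "congruence B r"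
  shows "equiv (NA (quot_monoid B r)) (R_ext_image B r)"
proof (rule equivI)
  have eqR: "equiv (NA B) (R_ext B r)" by (rule R_ext_equiv[OF bp congruence_sub[OF cg]])
  then have RX: "R_ext B r \<subseteq> NA B \<times> NA B" by (simp add: equiv_def)
  have img: "image_mset (\<lambda>a. r``{a}) M \<in> NA (quot_monoid B r)" if "M \<in> NA B" for M
    using that by (auto simp: NA_def quotient_simps quotientI)
  show "R_ext_image B r \<subseteq> NA (quot_monoid B r) \<times> NA (quot_monoid B r)"
    using RX img by (auto simp: R_ext_image_def)
  show "refl_on (NA (quot_monoid B r)) (R_ext_image B r)"
  proof (rule refl_onI)
    fix X assume "X \<in> NA (quot_monoid B r)"
    then obtain M where "M \<in> NA B" "image_mset (\<lambda>a. r``{a}) M = X"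
      using class_image_surj[OF congruence_equiv[OF cg]] by blast
    moreover have "(M, M) \<in> R_ext B r" if "M \<in> NA B" for M
      using eqR that by (auto simp: equiv_def refl_on_def)
    ultimately show "(X, X) \<in> R_ext_image B r" unfolding R_ext_image_def by blast
  qed
  show "sym (R_ext_image B r)"
    using eqR unfolding R_ext_image_def sym_def equiv_def by blast
  show "trans (R_ext_image B r)"
  proof (rule transI)
    fix X Y Z assume "(X, Y) \<in> R_ext_image B r" "(Y, Z) \<in> R_ext_image B r"
    then obtain M N N' K where XY: "X = image_mset (\<lambda>a. r``{a}) M" "Y = image_mset (\<lambda>a. r``{a}) N"
        "(M, N) \<in> R_ext B r"
      and YZ: "Y = image_mset (\<lambda>a. r``{a}) N'" "Z = image_mset (\<lambda>a. r``{a}) K" "(N', K) \<in> R_ext B r"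
      unfolding R_ext_image_def by blast
    have "(N, N') \<in> lin_gen r"
      using class_image_eq_lin_gen[OF congruence_equiv[OF cg]] XY YZ RX by blast
    then have "(N, N') \<in> R_ext B r" using lin_gen_sub_lin_ext lin_ext_sub_R_ext by blast
    then have "(M, K) \<in> R_ext B r" using XY(3) YZ(3) eqR unfolding equiv_def trans_def by blast
    then show "(X, Z) \<in> R_ext_image B r" using XY YZ unfolding R_ext_image_def by blast
  qed
qed

lemma R_ext_image_pre_addition:
  assumes bp: "blueprint B" and cg: "congruence B r"
  shows "pre_addition (quot_monoid B r) (R_ext_image B r)"
  unfolding pre_addition_def
proof (intro conjI R_ext_image_equiv[OF bp cg] allI impI)
  have RX: "R_ext B r \<subseteq> NA B \<times> NA B"
    using R_ext_equiv[OF bp congruence_sub[OF cg]] by (simp add: equiv_def)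
  fix X Y U V assume "(X, Y) \<in> R_ext_image B r" "(U, V) \<in> R_ext_image B r"
  then obtain M N P Q where XY: "X = image_mset (\<lambda>a. r``{a}) M" "Y = image_mset (\<lambda>a. r``{a}) N"
      "(M, N) \<in> R_ext B r"
    and UV: "U = image_mset (\<lambda>a. r``{a}) P" "V = image_mset (\<lambda>a. r``{a}) Q" "(P, Q) \<in> R_ext B r"
    unfolding R_ext_image_def by blast
  have closed: "(M + P, N + Q) \<in> R_ext B r" "(msum_mult B M P, msum_mult B N Q) \<in> R_ext B r"
    using R_ext_pre_addition[OF bp cg] XY(3) UV(3) unfolding pre_addition_def by blast+
  show "(X + U, Y + V) \<in> R_ext_image B r"
    using closed(1) XY UV unfolding R_ext_image_def by force
  have "msum_mult (quot_monoid B r) X U = image_mset (\<lambda>a. r``{a}) (msum_mult B M P)"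
    "msum_mult (quot_monoid B r) Y V = image_mset (\<lambda>a. r``{a}) (msum_mult B N Q)"
    using XY UV RX quot_msum_mult[OF bp cg] by blast+
  then show "(msum_mult (quot_monoid B r) X U, msum_mult (quot_monoid B r) Y V) \<in> R_ext_image B r"
    using closed(2) unfolding R_ext_image_def by blast
qed

lemma quotient_rel_sub:
  assumes bp: "blueprint B" and cg: "congruence B r"
  shows "bp_rel (quotient_bp B r) \<subseteq> R_ext_image B r"
  unfolding quotient_simps(4)
proof (rule Inter_lower, intro CollectI conjI R_ext_image_pre_addition[OF bp cg] subsetI)
  fix p assume "p \<in> {(image_mset (\<lambda>a. r``{a}) M, image_mset (\<lambda>a. r``{a}) N) | M N. (M, N) \<in> bp_rel B}"
  then show "p \<in> R_ext_image B r" using rel_sub_R_ext unfolding R_ext_image_def by blast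
qed

lemma quotient_rel_image:
  "(M, N) \<in> bp_rel B \<Longrightarrow>
    (image_mset (\<lambda>a. r``{a}) M, image_mset (\<lambda>a. r``{a}) N) \<in> bp_rel (quotient_bp B r)"
  unfolding quotient_simps(4) by blast

lemma single_image:
  assumes "image_mset f M = {#X#}" shows "\<exists>m. M = {#m#} \<and> f m = X"
  using msed_map_invR[of f M X "{#}"] assms by auto

lemma R_ext_image_single:
  assumes bp: "blueprint B" and cg: "congruence B r"
    and XY: "({#X#}, Y) \<in> R_ext_image B r"
  shows "\<exists>x N. x \<in> bp_carrier B \<and> X = r``{x} \<and> Y = image_mset (\<lambda>a. r``{a}) N
    \<and> ({#x#}, N) \<in> R_ext B r"
proof -
  obtain M N where MN: "{#X#} = image_mset (\<lambda>a. r``{a}) M" "Y = image_mset (\<lambda>a. r``{a}) N"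
      "(M, N) \<in> R_ext B r"
    using XY unfolding R_ext_image_def by blast
  obtain x where x: "M = {#x#}" "r``{x} = X" using single_image[OF MN(1)[symmetric]] by blast
  have "M \<in> NA B"
    using MN(3) R_ext_equiv[OF bp congruence_sub[OF cg]] by (auto simp: equiv_def)
  then have "x \<in> bp_carrier B" using x(1) by (simp add: NA_def)
  then show ?thesis using MN x by blast
qed

subsection \<open>Maximal congruences are prime\<close>

text \<open>\<open>B/\<sim>\<close> is proper: a relation \<open>[x] \<equiv> [y]\<close> lifts to \<open>x \<sim>\<^sub>\<R> y\<close>, i.e. \<open>x \<sim> y\<close> by (C2).\<close>

lemma quotient_proper:
  assumes bp: "blueprint B" and cg: "congruence B r"
  shows "proper_bp (quotient_bp B r)"
  unfolding proper_bp_def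
proof (intro ballI impI)
  fix X Y assume "({#X#}, {#Y#}) \<in> bp_rel (quotient_bp B r)"
  then obtain x N where x: "x \<in> bp_carrier B" "X = r``{x}"
      and N: "{#Y#} = image_mset (\<lambda>a. r``{a}) N" and xN: "({#x#}, N) \<in> R_ext B r"
    using R_ext_image_single[OF bp cg] quotient_rel_sub[OF bp cg] by blast
  obtain y where y: "N = {#y#}" "r``{y} = Y" using single_image[OF N[symmetric]] by blast
  have "N \<in> NA B"
    using xN R_ext_equiv[OF bp congruence_sub[OF cg]] by (auto simp: equiv_def)
  then have yC: "y \<in> bp_carrier B" using y(1) by (simp add: NA_def)
  then have "(x, y) \<in> r" using congruence_single_iff[OF cg x(1)] xN y(1) by simp
  then show "X = Y" using x y(2) eq_equiv_class_iff[OF congruence_equiv[OF cg] x(1) yC] by simp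
qed

text \<open>In \<open>B/\<sim>\<close>, \<open>[1]\<close> is not a zero: \<open>[1] \<equiv> 0\<close> would lift to \<open>1 \<sim> x \<sim> z\<close>.\<close>

lemma quotient_one_not_zero:
  assumes bp: "blueprint B" and pc: "proper_congruence B r" and z: "is_zero B z"
  shows "({#bp_one (quotient_bp B r)#}, {#}) \<notin> bp_rel (quotient_bp B r)"
proof
  have cg: "congruence B r" using pc by (simp add: proper_congruence_def)
  have zC: "z \<in> bp_carrier B" using z by (simp add: is_zero_def)
  assume "({#bp_one (quotient_bp B r)#}, {#}) \<in> bp_rel (quotient_bp B r)"
  then obtain x where x: "x \<in> bp_carrier B" "r``{bp_one B} = r``{x}" and x0: "({#x#}, {#}) \<in> R_ext B r"
    using R_ext_image_single[OF bp cg] quotient_rel_sub[OF bp cg]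
    unfolding quotient_simps(3) by fastforce
  have "({#z#}, {#}) \<in> R_ext B r" using z rel_sub_R_ext by (auto simp: is_zero_def)
  then have "({#x#}, {#z#}) \<in> R_ext B r"
    using x0 R_ext_equiv[OF bp congruence_sub[OF cg]] unfolding equiv_def sym_def trans_def by blast
  then have "(x, z) \<in> r" using congruence_single_iff[OF cg x(1) zC] by simp
  moreover have "(bp_one B, x) \<in> r"
    using x eq_equiv_class_iff[OF congruence_equiv[OF cg] monoid_one[OF bp_monoid[OF bp]]] by simp
  ultimately show False
    using proper_congruence_one_not_zero[OF bp pc z] congruence_trans[OF cg] by blast
qed

lemma quotient_zero_class:
  assumes "is_zero B z"
  shows "is_zero (quotient_bp B r) (r``{z})"
  using assms quotient_rel_image[of "{#z#}" "{#}" B r]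
  by (auto simp: is_zero_def quotient_simps quotientI)

lemma quotient_integral_class:
  assumes bp: "blueprint B" and cg: "congruence B r" and a: "a \<in> bp_carrier B"
    and cancel: "\<And>x y. x \<in> bp_carrier B \<Longrightarrow> y \<in> bp_carrier B
      \<Longrightarrow> (bp_mult B a x, bp_mult B a y) \<in> r \<Longrightarrow> (x, y) \<in> r"
  shows "integral_elem (quotient_bp B r) (r``{a})"
  unfolding integral_elem_def
proof (intro conjI inj_onI)
  note eq = congruence_equiv[OF cg] and mon = bp_monoid[OF bp]
  show "r``{a} \<in> bp_carrier (quotient_bp B r)" using a by (simp add: quotient_simps quotientI)
  fix X Y assume X: "X \<in> bp_carrier (quotient_bp B r)" and Y: "Y \<in> bp_carrier (quotient_bp B r)"
    and XY: "bp_mult (quotient_bp B r) (r``{a}) X = bp_mult (quotient_bp B r) (r``{a}) Y"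
  obtain x where x: "X = r``{x}" "x \<in> bp_carrier B" using X unfolding quotient_simps by (rule quotientE)
  obtain y where y: "Y = r``{y}" "y \<in> bp_carrier B" using Y unfolding quotient_simps by (rule quotientE)
  have "r``{bp_mult B a x} = r``{bp_mult B a y}"
    using XY unfolding quotient_simps(2) x(1) y(1) quot_mult_class[OF bp cg a x(2)]
      quot_mult_class[OF bp cg a y(2)] .
  then have "(bp_mult B a x, bp_mult B a y) \<in> r"
    using eq_equiv_class_iff[OF eq monoid_closed[OF mon a x(2)] monoid_closed[OF mon a y(2)]] by simp
  then have "(x, y) \<in> r" using cancel x(2) y(2) by blast
  then show "X = Y" using x y eq_equiv_class_iff[OF eq x(2) y(2)] by simp
qed

text \<open>Every class of \<open>B/\<sim>\<close> is either the zero class or, by cancellation, integral.\<close>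

theorem maximal_congruence_prime:
  assumes bp: "blueprint B" and z: "is_zero B z" and mc: "maximal_congruence B r"
  shows "prime_congruence B r"
proof -
  have pc: "proper_congruence B r" using mc by (simp add: maximal_congruence_def)
  then have cg: "congruence B r" by (simp add: proper_congruence_def)
  have "is_zero (quotient_bp B r) X \<or> integral_elem (quotient_bp B r) X"
    if X: "X \<in> bp_carrier (quotient_bp B r)" for X
  proof -
    obtain a where a: "X = r``{a}" "a \<in> bp_carrier B"
      using X unfolding quotient_simps by (rule quotientE)
    show ?thesis
    proof (cases "(a, z) \<in> r")
      case True
      then have "X = r``{z}" using a equiv_class_eq[OF congruence_equiv[OF cg]] by simp
      then show ?thesis using quotient_zero_class[OF z] by simp
    next
      case False
      then show ?thesis
        using a quotient_integral_class[OF bp cg a(2) maximal_congruence_cancel[OF bp z mc a(2)]]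
        by simp
    qed
  qed
  then show ?thesis unfolding prime_congruence_def integral_bp_def
    using pc quotient_proper[OF bp cg] quotient_one_not_zero[OF bp pc z] by blast
qed

theorem mainTheorem15:
  fixes B :: "'a blueprint"
  assumes "blueprint B"
  shows "(\<forall>I. maximal_ideal B I \<longrightarrow> prime_ideal B I)
    \<and> ((\<exists>e. is_zero B e) \<longrightarrow> (\<forall>r. maximal_congruence B r \<longrightarrow> prime_congruence B r))"
  using maximal_ideal_prime[OF assms] maximal_congruence_prime[OF assms] by blast

end
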